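(* Let $G=(V,E)$ with weight $\mu$ be an infinite, connected, locally finite weighted graph satisfying condition $(p_0)$, let $m>1$, and fix $o\in V$. Let $(p,q)\in G_2=\{(p,q)\in\mathbb R^2: q\ge m\}$. Suppose there exist constants $C>0$ and $n_1$ such that $$W_o(n)\le C\, n^{m}(\ln n)^{m-1}\quad\text{for all } n\ge n_1.$$ Then the inequality $\Delta_m u+u^p|\nabla u|^q\le 0$ on $V$ admits no nontrivial positive solution.
   Context: Setting: $G=(V,E)$ is an infinite, connected, locally finite graph with no loops and no multiple edges; $x\sim y$ means $x$ and $y$ are joined by an edge. A weight is a symmetric function $\mu:V\times V\to[0,\infty)$ with $\mu_{xy}=\mu_{yx}>0$ if and only if $x\sim y$; the vertex measure is $\mu(x)=\sum_{y\sim x}\mu_{xy}$. For $m>1$ and $u:V\to\mathbb R$, $\Delta_m u(x)=\frac{1}{\mu(x)}\sum_{y\sim x}\mu_{xy}|u(y)-u(x)|^{m-2}(u(y)-u(x))$ and $|\nabla u(x)|=\big(\sum_{y\sim x}\frac{\mu_{xy}}{2\mu(x)}(u(y)-u(x))^2\big)^{1/2}$. Condition $(p_0)$: there is a constant $p_0>1$ such that $\mu_{xy}/\mu(x)\ge 1/p_0$ for all $x\sim y$. $d(x,y)$ is the graph (shortest path) distance, $B(o,n)=\{x\in V: d(o,x)\le n\}$, and $W_o(n)=\sum_{x\in B(o,n),\,y\in V,\,d(o,x)<d(o,y)}\mu_{xy}$. A nontrivial positive solution of $\Delta_m u+u^p|\nabla u|^q\le 0$ is a non-constant function $u:V\to(0,\infty)$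 such that $\Delta_m u(x)+u(x)^p|\nabla u(x)|^q\le 0$ for every $x\in V$, with the conventions $0^0=1$, $0^q=0$ for $q>0$, and, for $q<0$, $|\nabla u(x)|^q=+\infty$ when $|\nabla u(x)|=0$ (so the inequality fails at such $x$). *)

theory Defs
  imports "HOL-Analysis.Analysis"
begin

definition weighted_graph :: "('v \<Rightarrow> 'v \<Rightarrow> bool) \<Rightarrow> ('v \<Rightarrow> 'v \<Rightarrow> real) \<Rightarrow> bool" where
  "weighted_graph adj mu \<longleftrightarrow>
     infinite (UNIV :: 'v set) \<and>
     (\<forall>x. \<not> adj x x) \<and>
     (\<forall>x y. adj x y \<longleftrightarrow> adj y x) \<and>
     (\<forall>x. finite {y. adj x y}) \<and>
     (\<forall>x y. (x, y) \<in> {(a, b). adj a b}\<^sup>*) \<and>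
     (\<forall>x y. mu x y = mu y x) \<and>
     (\<forall>x y. mu x y \<ge> 0) \<and>
     (\<forall>x y. mu x y > 0 \<longleftrightarrow> adj x y)"

definition vmeasure :: "('v \<Rightarrow> 'v \<Rightarrow> bool) \<Rightarrow> ('v \<Rightarrow> 'v \<Rightarrow> real) \<Rightarrow> 'v \<Rightarrow> real" where
  "vmeasure adj mu x = (\<Sum>y\<in>{y. adj x y}. mu x y)"

definition cond_p0 :: "('v \<Rightarrow> 'v \<Rightarrow> bool) \<Rightarrow> ('v \<Rightarrow> 'v \<Rightarrow> real) \<Rightarrow> bool" where
  "cond_p0 adj mu \<longleftrightarrow>
     (\<exists>p0::real. p0 > 1 \<and> (\<forall>x y. adj x y \<longrightarrow> mu x y / vmeasure adj mu x \<ge> 1 / p0))"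

text \<open>m-Laplacian; the convention |0|^(m-2) * 0 = 0 is built in via 0 powr a = 0.\<close>
definition m_laplacian :: "('v \<Rightarrow> 'v \<Rightarrow> bool) \<Rightarrow> ('v \<Rightarrow> 'v \<Rightarrow> real) \<Rightarrow> real \<Rightarrow> ('v \<Rightarrow> real) \<Rightarrow> 'v \<Rightarrow> real" where
  "m_laplacian adj mu m u x =
     (1 / vmeasure adj mu x) *
     (\<Sum>y\<in>{y. adj x y}. mu x y * (\<bar>u y - u x\<bar> powr (m - 2) * (u y - u x)))"

definition grad_norm :: "('v \<Rightarrow> 'v \<Rightarrow> bool) \<Rightarrow> ('v \<Rightarrow> 'v \<Rightarrow> real) \<Rightarrow> ('v \<Rightarrow> real) \<Rightarrow> 'v \<Rightarrow> real" where
  "grad_norm adj mu u x =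
     sqrt (\<Sum>y\<in>{y. adj x y}. mu x y / (2 * vmeasure adj mu x) * (u y - u x)\<^sup>2)"

definition gdist :: "('v \<Rightarrow> 'v \<Rightarrow> bool) \<Rightarrow> 'v \<Rightarrow> 'v \<Rightarrow> nat" where
  "gdist adj x y = (LEAST n. (x, y) \<in> {(a, b). adj a b} ^^ n)"

definition W_o :: "('v \<Rightarrow> 'v \<Rightarrow> bool) \<Rightarrow> ('v \<Rightarrow> 'v \<Rightarrow> real) \<Rightarrow> 'v \<Rightarrow> nat \<Rightarrow> real" where
  "W_o adj mu v0 n =
     (\<Sum>(x, y)\<in>{(x, y). gdist adj v0 x \<le> n \<and> adj x y \<and> gdist adj v0 x < gdist adj v0 y}. mu x y)"

text \<open>Nontrivial positive solution of  Delta_m u + u^p |grad u|^q <= 0, with the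
  conventions 0^0 = 1, 0^q = 0 for q > 0, and failure where |grad u| = 0 if q < 0.\<close>
definition is_nontrivial_positive_solution ::
  "('v \<Rightarrow> 'v \<Rightarrow> bool) \<Rightarrow> ('v \<Rightarrow> 'v \<Rightarrow> real) \<Rightarrow> real \<Rightarrow> real \<Rightarrow> real \<Rightarrow> ('v \<Rightarrow> real) \<Rightarrow> bool" where
  "is_nontrivial_positive_solution adj mu m p q u \<longleftrightarrow>
     (\<forall>x. u x > 0) \<and> (\<exists>x y. u x \<noteq> u y) \<and>
     (\<forall>x. let g = grad_norm adj mu u x in
            (if g = 0 then
               (if q = 0 then m_laplacian adj mu m u x + u x powr p \<le> 0
                else if q > 0 then m_laplacian adj mu m u x \<le> 0
                else False)
             else m_laplacian adj mu m u x + u x powr p * g powr q \<le> 0))"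

end

(*
  A solution is a nonconstant positive function with Delta_m u <= 0 (the gradient term is
  nonnegative because q > 0).  Testing Delta_m u <= 0 against eta^m u^(1-m) for a finitely
  supported cutoff eta and summing by parts, a two-point inequality shows that on an edge xy
  with u(x) ~= u(y) and eta = 1 the positive quantity
    mu_xy (u(x)^(1-m) - u(y)^(1-m)) |u(y) - u(x)|^(m-2) (u(y) - u(x))
  is at most a constant times the m-energy of eta.  Under W_o(n) <= C n^m (ln n)^(m-1) that
  energy can be made arbitrarily small: the cutoff which drops by 1/((j+1) H) across each
  dyadic annulus 2^j <= d(o,x) <= 2^(j+1), J0 <= j < J1, where H = sum_{J0 <= j < J1} 1/(j+1),
  has m-energy O(H^(1-m)), and H tends to infinity with J1.
*)
theory Submission
  imports Defs
begin

lemma powr_ge_tangent_at_one: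
  fixes x r :: real
  assumes "x > 0" "r \<ge> 1"
  shows "x powr r \<ge> 1 + r * (x - 1)"
proof -
  have "(\<lambda>x. x powr r) x - (\<lambda>x. x powr r) 1 \<ge> r * (x - 1)"
  proof (rule convex_on_imp_above_tangent[where A = "{0<..}"])
    show "convex_on {0<..} (\<lambda>x. x powr r)" using powr_convex assms by auto
    have "((\<lambda>z. z powr r) has_real_derivative r * 1 powr (r - 1)) (at 1)"
      by (rule has_real_derivative_powr) simp
    then show "((\<lambda>x. x powr r) has_field_derivative r) (at 1 within {0<..})"
      by (simp add: has_field_derivative_at_within)
  qed (use assms in \<open>auto simp: interior_open\<close>)
  then show ?thesis by simp
qed

lemma one_minus_powr_neg_ge:
  fixes \<rho> r :: real
  assumes "0 \<le> \<rho>" "\<rho> < 1" "r > 0"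
  shows "(1 - \<rho>) powr (- r) \<ge> 1 + r * \<rho>"
proof -
  have "\<rho> \<le> - ln (1 - \<rho>)" using ln_le_minus_one[of "1 - \<rho>"] assms by simp
  then have "r * \<rho> \<le> - r * ln (1 - \<rho>)" using mult_left_mono[of _ _ r] assms by fastforce
  also have "1 + - r * ln (1 - \<rho>) \<le> exp (- r * ln (1 - \<rho>))"
    by (rule exp_ge_add_one_self)
  finally show ?thesis using assms by (simp add: powr_def)
qed

lemma powr_diff_le_mean_value:
  fixes s t m :: real
  assumes "0 \<le> s" "s \<le> t" "m \<ge> 1"
  shows "t powr m - s powr m \<le> m * t powr (m - 1) * (t - s)"
proof (cases "s = 0")
  case True
  then show ?thesis using assms
    by (cases "t = 0") (auto simp: powr_diff field_simps)
next
  case False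
  with assms have s: "s > 0" and t: "t > 0" by auto
  have "s powr m / t powr m \<ge> 1 + m * (s / t - 1)"
    using powr_ge_tangent_at_one[of "s / t" m] s t assms by (simp add: powr_divide)
  then have "s powr m \<ge> t powr m - m * (t powr m / t) * (t - s)"
    using t by (simp add: field_simps)
  moreover have "t powr m / t = t powr (m - 1)" using t by (simp add: powr_diff)
  ultimately show ?thesis by simp
qed

lemma powr_minus_one_mult_self:
  fixes x m :: real
  assumes "x \<ge> 0" "m > 1"
  shows "x powr (m - 1) * x = x powr m"
  using assms by (cases "x = 0") (auto simp: powr_diff)

lemma powr_young_lower_bound:
  fixes m K x d :: real
  assumes m: "m > 1" and K: "K > 0" and x: "x \<ge> 0" and d: "d > 0"
  shows "(m - 1) * x powr m - K * x powr (m - 1) * d \<ge> - K * ((m - 1) / K) powr (1 - m) * d powr m"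
proof -
  define \<delta> where "\<delta> = (m - 1) / K"
  have \<delta>: "\<delta> > 0" using m K by (simp add: \<delta>_def)
  have rhs: "K * \<delta> powr (1 - m) * d powr m \<ge> 0" using K by simp
  show ?thesis
  proof (cases "d \<le> \<delta> * x")
    case True
    then have "K * d \<le> (m - 1) * x" using K by (simp add: \<delta>_def field_simps)
    then have "x powr (m - 1) * (K * d) \<le> x powr (m - 1) * ((m - 1) * x)"
      by (rule mult_left_mono) simp
    then show ?thesis
      using rhs powr_minus_one_mult_self[OF x m] by (simp add: \<delta>_def algebra_simps)
  next
    case False
    then have "x < d / \<delta>" using \<delta> by (simp add: field_simps)
    then have "x powr (m - 1) \<le> (d / \<delta>) powr (m - 1)"
      using x m by (intro powr_mono2) auto
    also have "\<dots> = d powr m * \<delta> powr (1 - m) / d"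
      using d \<delta> by (simp add: powr_divide powr_diff powr_minus_divide[symmetric])
    finally have "K * x powr (m - 1) * d \<le> K * \<delta> powr (1 - m) * d powr m"
      using K d by (simp add: field_simps)
    moreover have "(m - 1) * x powr m \<ge> 0" using m by simp
    ultimately show ?thesis by (simp add: \<delta>_def)
  qed
qed

text \<open>The summand \<open>2 powr m\<close> handles jumps \<open>t \<ge> 2 s\<close>; the other one is the constant of
  \<open>powr_young_lower_bound\<close> for \<open>K = m 2^(m-1)\<close>, the mean value bound of \<open>t^m - s^m\<close> on \<open>[s, 2 s]\<close>.\<close>

definition edge_const :: "real \<Rightarrow> real" where
  "edge_const m = (let K = m * 2 powr (m - 1) in 2 powr m + K * ((m - 1) / K) powr (1 - m))"

lemma edge_const_nonneg: "m > 1 \<Longrightarrow> edge_const m \<ge> 0"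
  unfolding edge_const_def Let_def by (intro add_nonneg_nonneg mult_nonneg_nonneg) auto

lemma powr_diff_le_doubling:
  fixes s t m :: real
  assumes "0 < s" "s \<le> t" "t \<le> 2 * s" "m \<ge> 1"
  shows "t powr m - s powr m \<le> m * 2 powr (m - 1) * s powr (m - 1) * (t - s)"
proof -
  have "t powr (m - 1) \<le> 2 powr (m - 1) * s powr (m - 1)"
    using assms powr_mono2[of "m - 1" t "2 * s"] by (simp add: powr_mult)
  have "t powr m - s powr m \<le> m * t powr (m - 1) * (t - s)"
    using assms by (intro powr_diff_le_mean_value) auto
  also have "\<dots> \<le> m * (2 powr (m - 1) * s powr (m - 1)) * (t - s)"
    using \<open>t powr (m - 1) \<le> _\<close> assms by (intro mult_right_mono mult_left_mono) auto
  finally show ?thesis by (simp only: mult_ac)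
qed

lemma ratio_powr_ge:
  fixes m \<rho> :: real
  assumes "m > 1" "0 \<le> \<rho>" "\<rho> < 1"
  shows "(\<rho> / (1 - \<rho>)) powr (m - 1) \<ge> \<rho> powr (m - 1) * (1 + (m - 1) * \<rho>)"
proof -
  have "(1 - \<rho>) powr (- (m - 1)) = 1 / (1 - \<rho>) powr (m - 1)"
    by (rule powr_minus_divide)
  then have "(\<rho> / (1 - \<rho>)) powr (m - 1) = \<rho> powr (m - 1) * (1 - \<rho>) powr (- (m - 1))"
    by (simp add: powr_divide)
  moreover have "(1 - \<rho>) powr (- (m - 1)) \<ge> 1 + (m - 1) * \<rho>"
    using one_minus_powr_neg_ge[of \<rho> "m - 1"] assms by simp
  ultimately show ?thesis by (simp add: mult_left_mono)
qed

lemma two_point_ratio_near_jump: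
  fixes m \<rho> s t :: real
  defines "K \<equiv> m * 2 powr (m - 1)"
  assumes m: "m > 1" and \<rho>: "0 \<le> \<rho>" "\<rho> < 1" and st: "0 < s" "s < t" "t < 2 * s"
  shows "s powr m * (\<rho> / (1 - \<rho>)) powr (m - 1) - t powr m * \<rho> powr (m - 1)
           \<ge> - K * ((m - 1) / K) powr (1 - m) * \<bar>t - s\<bar> powr m"
proof -
  define P where "P = \<rho> powr (m - 1)"
  have K: "K > 0" using m by (simp add: K_def)
  have P: "0 \<le> P" using \<rho> by (simp add: P_def)
  have XP: "(\<rho> / (1 - \<rho>)) powr (m - 1) \<ge> P + (m - 1) * (P * \<rho>)"
    using ratio_powr_ge[OF m \<rho>] by (simp add: P_def algebra_simps)
  have "t powr m - s powr m \<le> K * s powr (m - 1) * (t - s)"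
    using powr_diff_le_doubling[of s t m] st m by (simp add: K_def)
  then have "s powr m * (\<rho> / (1 - \<rho>)) powr (m - 1) - t powr m * P
      \<ge> P * ((m - 1) * (s powr m * \<rho>) - K * s powr (m - 1) * (t - s))"
    using mult_left_mono[OF XP, of "s powr m"] mult_right_mono[of _ _ P] P
    by (fastforce simp: algebra_simps)
  also have "P * ((m - 1) * (s powr m * \<rho>) - K * s powr (m - 1) * (t - s))
      = (m - 1) * (s * \<rho>) powr m - K * (s * \<rho>) powr (m - 1) * (t - s)"
  proof -
    have "(s * \<rho>) powr m = P * (s powr m * \<rho>)"
      using st \<rho> powr_minus_one_mult_self[OF \<rho>(1) m] by (simp add: P_def powr_mult)
    moreover have "(s * \<rho>) powr (m - 1) = P * s powr (m - 1)"
      using st \<rho> by (simp add: P_def powr_mult)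
    ultimately show ?thesis by (simp add: algebra_simps)
  qed
  also have "\<dots> \<ge> - K * ((m - 1) / K) powr (1 - m) * \<bar>t - s\<bar> powr m"
    using powr_young_lower_bound[OF m K, of "s * \<rho>" "t - s"] st \<rho> by simp
  finally show ?thesis by (simp add: P_def)
qed

text \<open>The two-point inequality below, written in the variable \<open>\<rho> = (b - a) / b\<close>.\<close>

lemma two_point_inequality_ratio:
  fixes m \<rho> s t :: real
  assumes m: "m > 1" and \<rho>: "0 \<le> \<rho>" "\<rho> < 1" and s: "0 \<le> s" and t: "0 \<le> t"
  shows "s powr m * (\<rho> / (1 - \<rho>)) powr (m - 1) - t powr m * \<rho> powr (m - 1)
           \<ge> - edge_const m * \<bar>t - s\<bar> powr m"
proof -
  define P where "P = \<rho> powr (m - 1)"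
  define X where "X = (\<rho> / (1 - \<rho>)) powr (m - 1)"
  define K where "K = m * 2 powr (m - 1)"
  have P: "0 \<le> P" "P \<le> 1" using \<rho> m powr_mono2[of "m - 1" \<rho> 1] by (auto simp: P_def)
  have "X \<ge> P + (m - 1) * (P * \<rho>)"
    using ratio_powr_ge[OF m \<rho>] by (simp add: X_def P_def algebra_simps)
  then have PX: "P \<le> X" using P \<rho> m by (smt (verit) mult_nonneg_nonneg)
  have C: "edge_const m * \<bar>t - s\<bar> powr m
      = 2 powr m * \<bar>t - s\<bar> powr m + K * ((m - 1) / K) powr (1 - m) * \<bar>t - s\<bar> powr m"
    by (simp add: edge_const_def K_def Let_def algebra_simps)
  have C_terms: "2 powr m * \<bar>t - s\<bar> powr m \<ge> 0" "K * ((m - 1) / K) powr (1 - m) * \<bar>t - s\<bar> powr m \<ge> 0"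
    using m by (auto simp: K_def)
  consider "t \<le> s" | "2 * s \<le> t" | "s < t" "t < 2 * s" by linarith
  then have "s powr m * X - t powr m * P \<ge> - edge_const m * \<bar>t - s\<bar> powr m"
  proof cases
    case 1
    have "t powr m * P \<le> s powr m * P" using 1 t m P by (intro mult_right_mono powr_mono2) auto
    moreover have "s powr m * P \<le> s powr m * X" using PX by (intro mult_left_mono) auto
    ultimately show ?thesis using C C_terms by linarith
  next
    case 2
    have "t powr m * P \<le> (2 * (t - s)) powr m"
      using 2 t m P mult_left_le[of P "t powr m"] powr_mono2[of m t "2 * (t - s)"] by auto
    also have "\<dots> = 2 powr m * \<bar>t - s\<bar> powr m" using 2 s powr_mult[of 2 "t - s" m] by simp
    moreover have "s powr m * X \<ge> 0" by (simp add: X_def)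
    ultimately show ?thesis using C C_terms by linarith
  next
    case 3
    have "s powr m * X - t powr m * P \<ge> - K * ((m - 1) / K) powr (1 - m) * \<bar>t - s\<bar> powr m"
      unfolding X_def P_def K_def by (rule two_point_ratio_near_jump[OF m \<rho>]) (use s 3 in auto)
    then show ?thesis using C C_terms by linarith
  qed
  then show ?thesis by (simp add: X_def P_def)
qed

definition m_flux :: "real \<Rightarrow> real \<Rightarrow> real" where
  "m_flux m t = \<bar>t\<bar> powr (m - 2) * t"

lemma m_flux_minus [simp]: "m_flux m (- t) = - m_flux m t"
  by (simp add: m_flux_def)

lemma m_flux_pos_eq: "t > 0 \<Longrightarrow> m_flux m t = t powr (m - 1)"
  using powr_add[of t "m - 2" 1] by (simp add: m_flux_def)

lemma two_point_inequality:
  fixes m a b s t :: real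
  assumes m: "m > 1" and a: "a > 0" and b: "b > 0" and s: "0 \<le> s" and t: "0 \<le> t"
  shows "(s powr m * a powr (1 - m) - t powr m * b powr (1 - m)) * m_flux m (b - a)
           \<ge> - edge_const m * \<bar>s - t\<bar> powr m"
proof -
  have ordered: "(s powr m * a powr (1 - m) - t powr m * b powr (1 - m)) * m_flux m (b - a)
      \<ge> - edge_const m * \<bar>t - s\<bar> powr m" if "0 < a" "a < b" "0 \<le> s" "0 \<le> t" for a b s t
  proof -
    define \<rho> where "\<rho> = (b - a) / b"
    have \<rho>: "0 \<le> \<rho>" "\<rho> < 1" "\<rho> / (1 - \<rho>) = (b - a) / a"
      using that by (auto simp: \<rho>_def field_simps)
    have "a powr (1 - m) = 1 / a powr (m - 1)" "b powr (1 - m) = 1 / b powr (m - 1)"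
      using powr_minus_divide[of _ "m - 1"] by simp_all
    then have "a powr (1 - m) * (b - a) powr (m - 1) = (\<rho> / (1 - \<rho>)) powr (m - 1)"
      and "b powr (1 - m) * (b - a) powr (m - 1) = \<rho> powr (m - 1)"
      using that by (simp add: \<rho>(3) powr_divide, simp add: powr_divide \<rho>_def)
    then have "(s powr m * a powr (1 - m) - t powr m * b powr (1 - m)) * m_flux m (b - a)
        = s powr m * (\<rho> / (1 - \<rho>)) powr (m - 1) - t powr m * \<rho> powr (m - 1)"
      using that by (simp add: m_flux_pos_eq algebra_simps)
    then show ?thesis using two_point_inequality_ratio[OF m \<rho>(1,2) that(3,4)] by simp
  qed
  consider "a < b" | "a = b" | "b < a" by linarith
  then show ?thesis
  proof cases
    case 1
    then show ?thesis using ordered[OF a 1 s t] by (simp add: abs_minus_commute)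
  next
    case 2
    then show ?thesis using edge_const_nonneg[OF m] by (simp add: m_flux_def)
  next
    case 3
    then show ?thesis using ordered[OF b 3 t s] m_flux_minus[of m "a - b"] by (simp add: algebra_simps)
  qed
qed

lemma two_point_gap_pos:
  fixes m a b :: real
  assumes m: "m > 1" and a: "a > 0" and b: "b > 0" and "a \<noteq> b"
  shows "(a powr (1 - m) - b powr (1 - m)) * m_flux m (b - a) > 0"
proof (cases "a < b")
  case True
  then have "b powr (1 - m) < a powr (1 - m)" using a m by (intro powr_less_mono2_neg) auto
  then show ?thesis using True by (simp add: m_flux_pos_eq)
next
  case False
  then have "a powr (1 - m) < b powr (1 - m)" using b m \<open>a \<noteq> b\<close> by (intro powr_less_mono2_neg) auto
  moreover have "m_flux m (b - a) < 0"
    using False \<open>a \<noteq> b\<close> m_flux_pos_eq[of "a - b" m] m_flux_minus[of m "a - b"] by simp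
  ultimately show ?thesis by (simp add: mult_neg_neg)
qed

definition harm_block :: "nat \<Rightarrow> nat \<Rightarrow> real" where
  "harm_block J0 J1 = (\<Sum>j\<in>{J0..<J1}. 1 / real (j + 1))"

definition dyadic_ramp :: "nat \<Rightarrow> nat \<Rightarrow> real" where
  "dyadic_ramp j k = min 1 (max 0 (2 - real k / 2 ^ j))"

definition log_cutoff :: "nat \<Rightarrow> nat \<Rightarrow> nat \<Rightarrow> real" where
  "log_cutoff J0 J1 k = (\<Sum>j\<in>{J0..<J1}. dyadic_ramp j k / (real (j + 1) * harm_block J0 J1))"

lemma dyadic_ramp_eq_1: "k \<le> 2 ^ j \<Longrightarrow> dyadic_ramp j k = 1"
proof -
  assume "k \<le> 2 ^ j"
  then have "real k \<le> 2 ^ j" by (metis of_nat_le_iff of_nat_numeral of_nat_power)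
  then have "real k / 2 ^ j \<le> 1" by simp
  then show ?thesis unfolding dyadic_ramp_def by linarith
qed

lemma dyadic_ramp_eq_0: "2 ^ (j + 1) \<le> k \<Longrightarrow> dyadic_ramp j k = 0"
proof -
  assume "2 ^ (j + 1) \<le> k"
  then have "2 * 2 ^ j \<le> real k" by (metis of_nat_le_iff of_nat_numeral of_nat_power power_Suc Suc_eq_plus1)
  then have "2 \<le> real k / 2 ^ j" by (simp add: le_divide_eq)
  then show ?thesis unfolding dyadic_ramp_def by linarith
qed

lemma dyadic_ramp_diff:
  "dyadic_ramp j k - dyadic_ramp j (Suc k) = (if 2 ^ j \<le> k \<and> k < 2 ^ (j + 1) then 1 / 2 ^ j else 0)"
proof -
  consider "k < 2 ^ j" | "2 ^ (j + 1) \<le> k" | "2 ^ j \<le> k" "k < 2 ^ (j + 1)" by (meson not_le)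
  then show ?thesis
  proof cases
    case 1
    then show ?thesis using dyadic_ramp_eq_1[of k j] dyadic_ramp_eq_1[of "Suc k" j] by simp
  next
    case 2
    then show ?thesis using dyadic_ramp_eq_0[of j k] dyadic_ramp_eq_0[of j "Suc k"] by simp
  next
    case 3
    then have "2 ^ j \<le> real k" "real k + 1 \<le> 2 * 2 ^ j"
      by (metis of_nat_le_iff of_nat_numeral of_nat_power,
          metis Suc_leI of_nat_Suc of_nat_le_iff of_nat_numeral of_nat_power power_Suc Suc_eq_plus1 add.commute)
    then have "1 \<le> real k / 2 ^ j" "real k / 2 ^ j + 1 / 2 ^ j \<le> 2"
      by (simp_all add: le_divide_eq add_divide_distrib[symmetric] divide_le_eq)
    moreover have "real (Suc k) / 2 ^ j = real k / 2 ^ j + 1 / 2 ^ j"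
      by (simp add: add_divide_distrib)
    moreover have "(0::real) < 1 / 2 ^ j" by simp
    ultimately have "dyadic_ramp j k - dyadic_ramp j (Suc k) = 1 / 2 ^ j"
      unfolding dyadic_ramp_def by linarith
    with 3 show ?thesis by simp
  qed
qed

lemma dyadic_block_unique:
  fixes k :: nat
  assumes "2 ^ i \<le> k" "k < 2 ^ (i + 1)" "2 ^ j \<le> k" "k < 2 ^ (j + 1)"
  shows "i = j"
proof -
  have "\<not> a < b" if "2 ^ b \<le> k" "k < 2 ^ (a + 1)" for a b
    using that power_increasing[of "a + 1" b "2::nat"] by auto
  then show ?thesis using assms by (meson linorder_neqE_nat)
qed

lemma harm_block_nonneg: "harm_block J0 J1 \<ge> 0"
  by (simp add: harm_block_def sum_nonneg)

lemma sum_log_cutoff_weights: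
  "harm_block J0 J1 > 0 \<Longrightarrow> (\<Sum>j\<in>{J0..<J1}. 1 / (real (j + 1) * harm_block J0 J1)) = 1"
proof -
  assume pos: "harm_block J0 J1 > 0"
  have "(\<Sum>j\<in>{J0..<J1}. 1 / (real (j + 1) * harm_block J0 J1)) = harm_block J0 J1 / harm_block J0 J1"
    unfolding harm_block_def[of J0 J1] sum_divide_distrib by simp
  then show ?thesis using pos by simp
qed

lemma log_cutoff_nonneg: "log_cutoff J0 J1 k \<ge> 0"
  unfolding log_cutoff_def dyadic_ramp_def using harm_block_nonneg by (intro sum_nonneg) auto

lemma log_cutoff_eq_1:
  assumes "harm_block J0 J1 > 0" "k \<le> 2 ^ J0"
  shows "log_cutoff J0 J1 k = 1"
proof -
  have "dyadic_ramp j k = 1" if "j \<in> {J0..<J1}" for j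
  proof -
    have "(2::nat) ^ J0 \<le> 2 ^ j" using that by (intro power_increasing) auto
    then show ?thesis using assms(2) by (intro dyadic_ramp_eq_1) linarith
  qed
  then have "log_cutoff J0 J1 k = (\<Sum>j\<in>{J0..<J1}. 1 / (real (j + 1) * harm_block J0 J1))"
    unfolding log_cutoff_def by (intro sum.cong) auto
  then show ?thesis using sum_log_cutoff_weights[OF assms(1)] by simp
qed

lemma log_cutoff_eq_0:
  assumes "2 ^ J1 \<le> k"
  shows "log_cutoff J0 J1 k = 0"
proof -
  have "dyadic_ramp j k = 0" if "j \<in> {J0..<J1}" for j
    using that assms power_increasing[of "j + 1" J1 "2::nat"] by (intro dyadic_ramp_eq_0) auto
  then show ?thesis unfolding log_cutoff_def by simp
qed

lemma log_cutoff_step_bound: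
  fixes J0 J1 k :: nat and m :: real
  defines "H \<equiv> harm_block J0 J1"
  shows "\<bar>log_cutoff J0 J1 k - log_cutoff J0 J1 (Suc k)\<bar> powr m
    \<le> (\<Sum>j\<in>{J0..<J1}. if k \<le> 2 ^ (j + 1) then (1 / (real (j + 1) * H * 2 ^ j)) powr m else 0)"
proof -
  let ?block = "\<lambda>j. 2 ^ j \<le> k \<and> k < (2::nat) ^ (j + 1)"
  have diff: "log_cutoff J0 J1 k - log_cutoff J0 J1 (Suc k)
      = (\<Sum>j\<in>{J0..<J1}. if ?block j then 1 / (real (j + 1) * H * 2 ^ j) else 0)"
    unfolding log_cutoff_def sum_subtractf[symmetric] diff_divide_distrib[symmetric] dyadic_ramp_diff
    by (intro sum.cong) (auto simp: H_def)
  show ?thesis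
  proof (cases "\<exists>j\<in>{J0..<J1}. ?block j")
    case True
    then obtain i where i: "i \<in> {J0..<J1}" "?block i" by blast
    have "log_cutoff J0 J1 k - log_cutoff J0 J1 (Suc k) = 1 / (real (i + 1) * H * 2 ^ i)"
    proof -
      have "(\<Sum>j\<in>{J0..<J1}. if ?block j then 1 / (real (j + 1) * H * 2 ^ j) else 0)
          = (\<Sum>j\<in>{J0..<J1}. if j = i then 1 / (real (j + 1) * H * 2 ^ j) else 0)"
        using i dyadic_block_unique[of i k] by (intro sum.cong) auto
      then show ?thesis unfolding diff using i(1) by simp
    qed
    then have "\<bar>log_cutoff J0 J1 k - log_cutoff J0 J1 (Suc k)\<bar> powr m
        = (if k \<le> 2 ^ (i + 1) then (1 / (real (i + 1) * H * 2 ^ i)) powr m else 0)"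
      using i harm_block_nonneg[of J0 J1] by (simp add: H_def)
    also have "\<dots> \<le> (\<Sum>j\<in>{J0..<J1}. if k \<le> 2 ^ (j + 1) then (1 / (real (j + 1) * H * 2 ^ j)) powr m else 0)"
      using i by (intro member_le_sum) auto
    finally show ?thesis .
  next
    case False
    then have "log_cutoff J0 J1 k - log_cutoff J0 J1 (Suc k) = 0"
      unfolding diff by (intro sum.neutral) auto
    then show ?thesis by (simp add: sum_nonneg)
  qed
qed

lemma dyadic_term_bound:
  fixes m C H w :: real and j :: nat
  assumes m: "m > 1" and C: "C \<ge> 0" and H: "H > 0"
    and w: "w \<le> C * real ((2::nat) ^ (j + 1)) powr m * ln (real ((2::nat) ^ (j + 1))) powr (m - 1)"
  shows "(1 / (real (j + 1) * H * 2 ^ j)) powr m * w \<le> C * 2 powr m * H powr (- m) / real (j + 1)"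
proof -
  define a where "a = real (j + 1)"
  have a: "a > 0" by (simp add: a_def)
  have "ln (real ((2::nat) ^ (j + 1))) = a * ln 2"
    unfolding a_def of_nat_power of_nat_numeral by (rule ln_realpow)
  also have "\<dots> \<le> a" using a ln_2_less_1 by (simp add: mult_left_le)
  finally have "ln (real ((2::nat) ^ (j + 1))) powr (m - 1) \<le> a powr (m - 1)"
    using a m one_le_power[of "2::real" "j + 1"] by (intro powr_mono2) (auto simp: a_def)
  then have "w \<le> C * (2 * 2 ^ j) powr m * a powr (m - 1)"
    using w C mult_left_mono[of _ _ "C * (2 * 2 ^ j) powr m"] by (fastforce intro: order.trans)
  then have "(1 / (a * H * 2 ^ j)) powr m * w
      \<le> (1 / (a * H * 2 ^ j)) powr m * (C * (2 * 2 ^ j) powr m * a powr (m - 1))"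
    by (rule mult_left_mono) simp
  also have "\<dots> = C * ((1 / (a * H * 2 ^ j)) powr m * (2 * 2 ^ j) powr m) * a powr (m - 1)"
    by (simp only: mult_ac)
  also have "(1 / (a * H * 2 ^ j)) powr m * (2 * 2 ^ j) powr m = (2 / (a * H)) powr m"
    using a H by (simp add: powr_mult[symmetric])
  also have "\<dots> = 2 powr m / (a powr m * H powr m)"
    using a H by (simp add: powr_divide powr_mult)
  also have "C * (2 powr m / (a powr m * H powr m)) * a powr (m - 1) = C * 2 powr m * H powr (- m) / a"
    using a H by (simp add: powr_diff powr_minus_divide field_simps)
  finally show ?thesis by (simp add: a_def)
qed

lemma log_cutoff_dyadic_sum_le:
  fixes m C :: real and W :: "nat \<Rightarrow> real" and J0 J1 n1 :: nat
  defines "H \<equiv> harm_block J0 J1"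
  assumes m: "m > 1" and C: "C \<ge> 0" and H: "H > 0"
    and growth: "\<And>n. n \<ge> n1 \<Longrightarrow> W n \<le> C * real n powr m * ln (real n) powr (m - 1)"
    and n1: "n1 \<le> 2 ^ J0"
  shows "(\<Sum>j\<in>{J0..<J1}. (1 / (real (j + 1) * H * 2 ^ j)) powr m * W (2 ^ (j + 1)))
         \<le> C * 2 powr m * H powr (1 - m)"
proof -
  have "(\<Sum>j\<in>{J0..<J1}. (1 / (real (j + 1) * H * 2 ^ j)) powr m * W (2 ^ (j + 1)))
      \<le> (\<Sum>j\<in>{J0..<J1}. C * 2 powr m * H powr (- m) / real (j + 1))"
  proof (intro sum_mono dyadic_term_bound[OF m C H] growth)
    fix j assume "j \<in> {J0..<J1}"
    then have "(2::nat) ^ J0 \<le> 2 ^ (j + 1)" by (intro power_increasing) auto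
    then show "n1 \<le> 2 ^ (j + 1)" using n1 by linarith
  qed
  also have "\<dots> = C * 2 powr m * H powr (- m) * H"
    by (simp add: H_def harm_block_def sum_distrib_left)
  also have "\<dots> = C * 2 powr m * H powr (1 - m)"
    using H by (simp add: powr_add[of H "- m" 1, simplified] mult.assoc)
  finally show ?thesis .
qed

lemma harm_block_unbounded: "\<exists>J1>J0. harm_block J0 J1 \<ge> T"
proof -
  obtain N where N: "\<And>n. n \<ge> N \<Longrightarrow> harm n \<ge> T + harm J0"
    using harm_at_top by (auto simp: filterlim_at_top eventually_sequentially)
  define J1 where "J1 = max N (Suc J0)"
  have "harm J1 = harm J0 + harm_block J0 J1"
    unfolding harm_altdef harm_block_def lessThan_atLeast0
    by (subst sum.atLeastLessThan_concat[of 0 J0 J1, symmetric]) (auto simp: J1_def inverse_eq_divide)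
  then show ?thesis using N[of J1] by (intro exI[of _ J1]) (auto simp: J1_def)
qed

text \<open>Ordered pairs: every edge inside the ball is counted in both directions.\<close>

definition ball_edges :: "('v \<Rightarrow> 'v \<Rightarrow> bool) \<Rightarrow> 'v \<Rightarrow> nat \<Rightarrow> ('v \<times> 'v) set" where
  "ball_edges adj v0 N = {(x, y). gdist adj v0 x \<le> N \<and> gdist adj v0 y \<le> N \<and> adj x y}"

definition m_energy ::
  "('v \<Rightarrow> 'v \<Rightarrow> bool) \<Rightarrow> ('v \<Rightarrow> 'v \<Rightarrow> real) \<Rightarrow> 'v \<Rightarrow> nat \<Rightarrow> real \<Rightarrow> ('v \<Rightarrow> real) \<Rightarrow> real" where
  "m_energy adj mu v0 N m \<eta> = (\<Sum>(x, y)\<in>ball_edges adj v0 N. mu x y * \<bar>\<eta> x - \<eta> y\<bar> powr m)"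

locale wgraph =
  fixes adj :: "'v \<Rightarrow> 'v \<Rightarrow> bool" and mu :: "'v \<Rightarrow> 'v \<Rightarrow> real"
  assumes graph: "weighted_graph adj mu"
begin

lemma finite_neighbours: "finite {y. adj x y}"
  using graph unfolding weighted_graph_def by blast

lemma adj_sym: "adj x y \<longleftrightarrow> adj y x"
  using graph by (simp add: weighted_graph_def)

lemma mu_sym: "mu x y = mu y x"
  using graph by (simp add: weighted_graph_def)

lemma mu_nonneg: "mu x y \<ge> 0"
  using graph by (simp add: weighted_graph_def)

lemma mu_pos: "adj x y \<Longrightarrow> mu x y > 0"
  using graph by (simp add: weighted_graph_def)

lemma reachable: "(x, y) \<in> {(a, b). adj a b}\<^sup>*"
  using graph by (simp add: weighted_graph_def)

lemma ex_neighbour: "\<exists>y. adj x y"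
proof -
  obtain y :: 'v where "y \<noteq> x"
    using graph ex_new_if_finite[of "{x}"] unfolding weighted_graph_def by auto
  with reachable[of x y] show ?thesis by (auto elim: converse_rtranclE)
qed

lemma vmeasure_pos: "vmeasure adj mu x > 0"
proof -
  obtain y where y: "adj x y" using ex_neighbour by blast
  have "mu x y \<le> vmeasure adj mu x" unfolding vmeasure_def
    using y finite_neighbours mu_nonneg by (intro member_le_sum) auto
  then show ?thesis using mu_pos[OF y] by simp
qed

lemma m_laplacian_nonpos_iff:
  "m_laplacian adj mu m u x \<le> 0 \<longleftrightarrow> (\<Sum>y\<in>{y. adj x y}. mu x y * m_flux m (u y - u x)) \<le> 0"
  using vmeasure_pos[of x] by (simp add: m_laplacian_def m_flux_def divide_le_0_iff)

lemma nonconstant_imp_ex_edge: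
  assumes "u x \<noteq> u y"
  shows "\<exists>x' y'. adj x' y' \<and> u x' \<noteq> u y'"
proof (rule ccontr)
  assume no_edge: "\<not> ?thesis"
  have "(a, b) \<in> {(a, b). adj a b}\<^sup>* \<Longrightarrow> u a = u b" for a b
    by (induction rule: rtrancl_induct) (use no_edge in auto)
  then show False using assms reachable by blast
qed

lemma gdist_relpow: "(v0, x) \<in> {(a, b). adj a b} ^^ gdist adj v0 x"
proof -
  obtain n where "(v0, x) \<in> {(a, b). adj a b} ^^ n" using reachable rtrancl_power by blast
  then show ?thesis unfolding gdist_def by (rule LeastI)
qed

lemma gdist_le_relpow: "(v0, x) \<in> {(a, b). adj a b} ^^ n \<Longrightarrow> gdist adj v0 x \<le> n"
  unfolding gdist_def by (rule Least_le)

lemma gdist_adj_le: "adj x y \<Longrightarrow> gdist adj v0 y \<le> gdist adj v0 x + 1"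
  using gdist_relpow[of v0 x] by (auto intro: gdist_le_relpow relpow_Suc_I)

lemma gdist_adj_cases:
  assumes "adj x y"
  obtains "gdist adj v0 x = gdist adj v0 y"
    | "gdist adj v0 y = Suc (gdist adj v0 x)"
    | "gdist adj v0 x = Suc (gdist adj v0 y)"
  using gdist_adj_le[OF assms, of v0] gdist_adj_le[of y x v0] assms adj_sym by fastforce

lemma gdist_Suc_imp_ex_adj: "gdist adj v0 x = Suc k \<Longrightarrow> \<exists>z. adj z x \<and> gdist adj v0 z \<le> k"
  using gdist_relpow[of v0 x] by (auto elim: relpow_Suc_E intro: gdist_le_relpow)

lemma finite_ball: "finite {x. gdist adj v0 x \<le> n}"
proof (induction n)
  case 0
  have "{x. gdist adj v0 x \<le> 0} \<subseteq> {v0}"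
    using gdist_relpow[of v0] by (metis (mono_tags) le_zero_eq mem_Collect_eq relpow_0_E singletonI subsetI)
  then show ?case using finite_subset by blast
next
  case (Suc n)
  have "{x. gdist adj v0 x \<le> Suc n} \<subseteq> {x. gdist adj v0 x \<le> n} \<union> (\<Union>z\<in>{x. gdist adj v0 x \<le> n}. {y. adj z y})"
    using gdist_Suc_imp_ex_adj by (fastforce simp: le_Suc_eq)
  then show ?case using Suc finite_neighbours by (auto intro: finite_subset)
qed

lemma finite_ball_edges: "finite (ball_edges adj v0 N)"
  by (rule finite_subset[of _ "{x. gdist adj v0 x \<le> N} \<times> {x. gdist adj v0 x \<le> N}"])
    (auto simp: ball_edges_def finite_ball)

lemma sum_ball_edges_swap:
  "(\<Sum>(x, y)\<in>ball_edges adj v0 N. g x y) = (\<Sum>(x, y)\<in>ball_edges adj v0 N. g y x)"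
  by (rule sum.reindex_bij_witness[where i = prod.swap and j = prod.swap])
    (auto simp: ball_edges_def adj_sym)

lemma sum_ball_by_parts:
  fixes \<phi> :: "'v \<Rightarrow> real" and F :: "'v \<Rightarrow> 'v \<Rightarrow> real"
  assumes F_antisym: "\<And>x y. F y x = - F x y"
    and \<phi>_supp: "\<And>x. N \<le> gdist adj v0 x \<Longrightarrow> \<phi> x = 0"
  shows "2 * (\<Sum>x\<in>{x. gdist adj v0 x \<le> N}. \<phi> x * (\<Sum>y\<in>{y. adj x y}. mu x y * F x y))
       = (\<Sum>(x, y)\<in>ball_edges adj v0 N. mu x y * (\<phi> x - \<phi> y) * F x y)"
proof -
  define B where "B = {x. gdist adj v0 x \<le> N}"
  define S where "S = (\<Sum>(x, y)\<in>ball_edges adj v0 N. \<phi> x * mu x y * F x y)"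
  have fin: "finite (Sigma B (\<lambda>x. {y. adj x y}))"
    using finite_ball finite_neighbours by (auto simp: B_def)
  have "(\<Sum>x\<in>B. \<phi> x * (\<Sum>y\<in>{y. adj x y}. mu x y * F x y))
      = (\<Sum>(x, y)\<in>Sigma B (\<lambda>x. {y. adj x y}). \<phi> x * mu x y * F x y)"
    using finite_ball finite_neighbours
    by (simp add: B_def sum.Sigma sum_distrib_left mult.assoc)
  also have "\<dots> = S" unfolding S_def
  proof (rule sum.mono_neutral_right[OF fin])
    show "ball_edges adj v0 N \<subseteq> Sigma B (\<lambda>x. {y. adj x y})" by (auto simp: ball_edges_def B_def)
    show "\<forall>p\<in>Sigma B (\<lambda>x. {y. adj x y}) - ball_edges adj v0 N. (\<lambda>(x, y). \<phi> x * mu x y * F x y) p = 0"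
    proof (clarify)
      fix x y assume "x \<in> B" "adj x y" "(x, y) \<notin> ball_edges adj v0 N"
      then have "N \<le> gdist adj v0 x" using gdist_adj_le[of x y v0] by (auto simp: ball_edges_def B_def)
      then show "\<phi> x * mu x y * F x y = 0" by (simp add: \<phi>_supp)
    qed
  qed
  finally have S_eq: "(\<Sum>x\<in>B. \<phi> x * (\<Sum>y\<in>{y. adj x y}. mu x y * F x y)) = S" .
  have "S = (\<Sum>(x, y)\<in>ball_edges adj v0 N. \<phi> y * mu y x * F y x)"
    unfolding S_def by (rule sum_ball_edges_swap)
  also have "\<dots> = - (\<Sum>(x, y)\<in>ball_edges adj v0 N. \<phi> y * mu x y * F x y)"
  proof -
    have "\<phi> y * mu y x * F y x = - (\<phi> y * mu x y * F x y)" for x y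
      using mu_sym[of y x] F_antisym[of x y] by simp
    then show ?thesis by (simp add: sum_negf[symmetric] case_prod_beta)
  qed
  finally have "2 * S = S - (\<Sum>(x, y)\<in>ball_edges adj v0 N. \<phi> y * mu x y * F x y)" by simp
  also have "\<dots> = (\<Sum>(x, y)\<in>ball_edges adj v0 N. mu x y * (\<phi> x - \<phi> y) * F x y)"
    by (simp add: S_def case_prod_beta sum_subtractf[symmetric] algebra_simps)
  finally show ?thesis using S_eq by (simp add: B_def)
qed

lemma superharmonic_edge_le_energy:
  fixes u \<eta> :: "'v \<Rightarrow> real"
  assumes m: "m > 1" and u_pos: "\<And>x. u x > 0"
    and superharmonic: "\<And>x. m_laplacian adj mu m u x \<le> 0"
    and \<eta>_nonneg: "\<And>x. \<eta> x \<ge> 0" and \<eta>_supp: "\<And>x. N \<le> gdist adj v0 x \<Longrightarrow> \<eta> x = 0"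
    and edge: "(x0, y0) \<in> ball_edges adj v0 N" and \<eta>_edge: "\<eta> x0 = 1" "\<eta> y0 = 1"
  shows "mu x0 y0 * ((u x0 powr (1 - m) - u y0 powr (1 - m)) * m_flux m (u y0 - u x0))
           \<le> edge_const m * m_energy adj mu v0 N m \<eta>"
proof -
  define \<phi> where "\<phi> x = \<eta> x powr m * u x powr (1 - m)" for x
  define flux_term where "flux_term = (\<lambda>(x, y). mu x y * (\<phi> x - \<phi> y) * m_flux m (u y - u x))"
  define G where "G = (\<lambda>(x, y). mu x y * \<bar>\<eta> x - \<eta> y\<bar> powr m)"
  have "2 * (\<Sum>x\<in>{x. gdist adj v0 x \<le> N}. \<phi> x * (\<Sum>y\<in>{y. adj x y}. mu x y * m_flux m (u y - u x)))
      = sum flux_term (ball_edges adj v0 N)"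
    unfolding flux_term_def
    by (rule sum_ball_by_parts[where F = "\<lambda>x y. m_flux m (u y - u x)"])
      (auto simp: \<phi>_def \<eta>_supp simp flip: m_flux_minus)
  moreover have "\<phi> x * (\<Sum>y\<in>{y. adj x y}. mu x y * m_flux m (u y - u x)) \<le> 0" for x
    using superharmonic[of x] by (intro mult_nonneg_nonpos) (auto simp: \<phi>_def m_laplacian_nonpos_iff)
  ultimately have flux_sum_nonpos: "sum flux_term (ball_edges adj v0 N) \<le> 0"
    by (metis (no_types, lifting) sum_nonpos mult_nonneg_nonpos zero_le_numeral)
  have flux_term_lower: "flux_term p + edge_const m * G p \<ge> 0" for p
  proof (cases p)
    case (Pair x y)
    have "mu x y * (- edge_const m * \<bar>\<eta> x - \<eta> y\<bar> powr m)
        \<le> mu x y * ((\<phi> x - \<phi> y) * m_flux m (u y - u x))"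
      unfolding \<phi>_def
      by (rule mult_left_mono[OF two_point_inequality mu_nonneg]) (use m u_pos \<eta>_nonneg in auto)
    then show ?thesis by (simp add: Pair flux_term_def G_def algebra_simps)
  qed
  have "flux_term (x0, y0) + edge_const m * G (x0, y0)
      \<le> (\<Sum>p\<in>ball_edges adj v0 N. flux_term p + edge_const m * G p)"
    using finite_ball_edges edge flux_term_lower by (intro member_le_sum) auto
  also have "\<dots> = sum flux_term (ball_edges adj v0 N) + edge_const m * m_energy adj mu v0 N m \<eta>"
    by (simp add: sum.distrib sum_distrib_left m_energy_def G_def case_prod_beta)
  finally show ?thesis
    using flux_sum_nonpos by (simp add: flux_term_def G_def \<phi>_def \<eta>_edge algebra_simps)
qed

lemma m_energy_radial_eq:
  fixes f :: "nat \<Rightarrow> real"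
  shows "m_energy adj mu v0 N m (\<lambda>x. f (gdist adj v0 x))
    = 2 * (\<Sum>(x, y)\<in>ball_edges adj v0 N. if gdist adj v0 x < gdist adj v0 y
             then mu x y * \<bar>f (gdist adj v0 x) - f (Suc (gdist adj v0 x))\<bar> powr m else 0)"
proof -
  define h where "h x y = (if gdist adj v0 x < gdist adj v0 y
    then mu x y * \<bar>f (gdist adj v0 x) - f (Suc (gdist adj v0 x))\<bar> powr m else 0)" for x y
  have "mu x y * \<bar>f (gdist adj v0 x) - f (gdist adj v0 y)\<bar> powr m = h x y + h y x"
    if "(x, y) \<in> ball_edges adj v0 N" for x y
    using that by (auto simp: ball_edges_def h_def mu_sym[of y x] abs_minus_commute
      elim: gdist_adj_cases[of _ _ v0])
  then have "m_energy adj mu v0 N m (\<lambda>x. f (gdist adj v0 x))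
      = (\<Sum>(x, y)\<in>ball_edges adj v0 N. h x y) + (\<Sum>(x, y)\<in>ball_edges adj v0 N. h y x)"
    unfolding m_energy_def sum.distrib[symmetric] by (intro sum.cong) auto
  also have "(\<Sum>(x, y)\<in>ball_edges adj v0 N. h y x) = (\<Sum>(x, y)\<in>ball_edges adj v0 N. h x y)"
    by (rule sum_ball_edges_swap[symmetric])
  finally show ?thesis by (simp add: h_def)
qed

lemma sum_outward_ball_edges_le_W_o:
  "(\<Sum>(x, y)\<in>ball_edges adj v0 N.
      if gdist adj v0 x < gdist adj v0 y \<and> gdist adj v0 x \<le> n then mu x y else 0)
    \<le> W_o adj mu v0 n"
proof -
  define W where "W = {(x, y). gdist adj v0 x \<le> n \<and> adj x y \<and> gdist adj v0 x < gdist adj v0 y}"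
  have "finite W"
    by (rule finite_subset[of _ "Sigma {x. gdist adj v0 x \<le> n} (\<lambda>x. {y. adj x y})"])
      (auto simp: W_def finite_ball finite_neighbours)
  have "(\<Sum>(x, y)\<in>ball_edges adj v0 N.
      if gdist adj v0 x < gdist adj v0 y \<and> gdist adj v0 x \<le> n then mu x y else 0)
      = (\<Sum>(x, y)\<in>ball_edges adj v0 N \<inter> W. mu x y)"
    using finite_ball_edges
    by (simp add: sum.inter_restrict W_def case_prod_beta if_distrib ball_edges_def conj_commute)
  also have "\<dots> \<le> (\<Sum>(x, y)\<in>W. mu x y)"
    using \<open>finite W\<close> mu_nonneg by (intro sum_mono2) auto
  finally show ?thesis by (simp add: W_o_def W_def)
qed

lemma m_energy_radial_le:
  fixes f :: "nat \<Rightarrow> real" and \<gamma> :: "'j \<Rightarrow> real" and n :: "'j \<Rightarrow> nat"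
  assumes "finite J" and \<gamma>_nonneg: "\<And>j. \<gamma> j \<ge> 0"
    and step: "\<And>k. \<bar>f k - f (Suc k)\<bar> powr m \<le> (\<Sum>j\<in>J. if k \<le> n j then \<gamma> j else 0)"
  shows "m_energy adj mu v0 N m (\<lambda>x. f (gdist adj v0 x)) \<le> 2 * (\<Sum>j\<in>J. \<gamma> j * W_o adj mu v0 (n j))"
proof -
  let ?d = "gdist adj v0"
  have "m_energy adj mu v0 N m (\<lambda>x. f (?d x))
      = 2 * (\<Sum>(x, y)\<in>ball_edges adj v0 N. if ?d x < ?d y
               then mu x y * \<bar>f (?d x) - f (Suc (?d x))\<bar> powr m else 0)"
    by (rule m_energy_radial_eq)
  also have "\<dots> \<le> 2 * (\<Sum>(x, y)\<in>ball_edges adj v0 N. \<Sum>j\<in>J.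
               \<gamma> j * (if ?d x < ?d y \<and> ?d x \<le> n j then mu x y else 0))"
  proof -
    have "(if ?d x < ?d y then mu x y * \<bar>f (?d x) - f (Suc (?d x))\<bar> powr m else 0)
        \<le> (\<Sum>j\<in>J. \<gamma> j * (if ?d x < ?d y \<and> ?d x \<le> n j then mu x y else 0))" for x y
      using mult_left_mono[OF step mu_nonneg[of x y]]
      by (simp add: sum_distrib_left if_distrib mult.commute cong: if_cong)
    then show ?thesis by (auto intro: sum_mono)
  qed
  also have "\<dots> = 2 * (\<Sum>j\<in>J. \<gamma> j * (\<Sum>(x, y)\<in>ball_edges adj v0 N.
               if ?d x < ?d y \<and> ?d x \<le> n j then mu x y else 0))"
    by (simp add: sum.swap[of _ J] sum_distrib_left case_prod_beta)
  also have "\<dots> \<le> 2 * (\<Sum>j\<in>J. \<gamma> j * W_o adj mu v0 (n j))"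
    using sum_outward_ball_edges_le_W_o \<gamma>_nonneg
    by (auto intro!: sum_mono mult_left_mono)
  finally show ?thesis .
qed

lemma volume_growth_imp_small_energy_cutoff:
  assumes m: "m > 1"
    and "\<exists>C::real. \<exists>n1::nat. C > 0 \<and>
           (\<forall>n\<ge>n1. W_o adj mu v0 n \<le> C * real n powr m * ln (real n) powr (m - 1))"
    and \<epsilon>: "\<epsilon> > 0"
  obtains \<eta> N where "\<And>x. \<eta> x \<ge> 0" "\<And>x. N \<le> gdist adj v0 x \<Longrightarrow> \<eta> x = 0"
    "\<And>x. gdist adj v0 x \<le> R \<Longrightarrow> \<eta> x = 1" "R \<le> N" "m_energy adj mu v0 N m \<eta> \<le> \<epsilon>"
proof -
  obtain C n1 where C: "C > 0"
    and growth: "\<forall>n\<ge>n1. W_o adj mu v0 n \<le> C * real n powr m * ln (real n) powr (m - 1)"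
    using assms(2) by blast
  define T where "T = (2 * C * 2 powr m / \<epsilon>) powr (1 / (m - 1))"
  have T: "T > 0" using C \<epsilon> by (simp add: T_def)
  have T_powr: "2 * C * 2 powr m * T powr (1 - m) = \<epsilon>"
  proof -
    have "1 / (m - 1) * (1 - m) = - 1" using m by (simp add: field_simps)
    then have "T powr (1 - m) = (2 * C * 2 powr m / \<epsilon>) powr (- 1)"
      unfolding T_def powr_powr by simp
    then show ?thesis using C \<epsilon> by (simp add: powr_minus_divide)
  qed
  define J0 where "J0 = R + n1"
  have "J0 < 2 ^ J0" by (rule less_exp)
  then have R: "R \<le> 2 ^ J0" and n1: "n1 \<le> 2 ^ J0" unfolding J0_def by linarith+
  obtain J1 where "J1 > J0" and HT: "harm_block J0 J1 \<ge> T" using harm_block_unbounded by blast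
  define H where "H = harm_block J0 J1"
  have H: "H > 0" using HT T by (simp add: H_def)
  have "(2::nat) ^ J0 \<le> 2 ^ J1" using \<open>J1 > J0\<close> by (intro power_increasing) auto
  then have R_N: "R \<le> 2 ^ J1" using R by linarith
  have "m_energy adj mu v0 (2 ^ J1) m (\<lambda>x. log_cutoff J0 J1 (gdist adj v0 x))
      \<le> 2 * (\<Sum>j\<in>{J0..<J1}. (1 / (real (j + 1) * H * 2 ^ j)) powr m * W_o adj mu v0 (2 ^ (j + 1)))"
    unfolding H_def by (rule m_energy_radial_le[OF _ _ log_cutoff_step_bound]) auto
  also have "\<dots> \<le> 2 * (C * 2 powr m * H powr (1 - m))"
    using log_cutoff_dyadic_sum_le[OF m less_imp_le[OF C] H[unfolded H_def] _ n1] growth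
    by (simp add: H_def)
  also have "\<dots> \<le> 2 * C * 2 powr m * T powr (1 - m)"
    using C m T HT powr_mono2'[of "1 - m" T H] by (simp add: H_def)
  finally have energy: "m_energy adj mu v0 (2 ^ J1) m (\<lambda>x. log_cutoff J0 J1 (gdist adj v0 x)) \<le> \<epsilon>"
    using T_powr by simp
  show ?thesis
    by (rule that[OF _ _ _ _ energy])
      (use R H R_N in \<open>auto simp: H_def log_cutoff_nonneg log_cutoff_eq_0 log_cutoff_eq_1\<close>)
qed

end

lemma nontrivial_positive_solution_superharmonic:
  assumes "is_nontrivial_positive_solution adj mu m p q u" and "q > 0"
  shows "m_laplacian adj mu m u x \<le> 0"
proof -
  have "u x powr p * grad_norm adj mu u x powr q \<ge> 0" by simp
  then show ?thesis
    using assms unfolding is_nontrivial_positive_solution_def Let_def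
    by (smt (verit) less_irrefl)
qed

theorem theorem1p1:
  fixes adj :: "'v \<Rightarrow> 'v \<Rightarrow> bool" and mu :: "'v \<Rightarrow> 'v \<Rightarrow> real"
    and m p q :: real and v0 :: 'v
  assumes "weighted_graph adj mu"
    and "cond_p0 adj mu"
    and "m > 1"
    and "q \<ge> m"
    and "\<exists>C::real. \<exists>n1::nat. C > 0 \<and>
           (\<forall>n\<ge>n1. W_o adj mu v0 n \<le> C * real n powr m * ln (real n) powr (m - 1))"
  shows "\<not> (\<exists>u. is_nontrivial_positive_solution adj mu m p q u)"
proof
  interpret wgraph adj mu by unfold_locales (rule assms(1))
  assume "\<exists>u. is_nontrivial_positive_solution adj mu m p q u"
  then obtain u where sol: "is_nontrivial_positive_solution adj mu m p q u" ..
  then have u_pos: "\<And>x. u x > 0" and "\<exists>x y. u x \<noteq> u y"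
    by (auto simp: is_nontrivial_positive_solution_def)
  then obtain x0 y0 where edge: "adj x0 y0" "u x0 \<noteq> u y0" by (metis nonconstant_imp_ex_edge)
  define gap where "gap = mu x0 y0 * ((u x0 powr (1 - m) - u y0 powr (1 - m)) * m_flux m (u y0 - u x0))"
  have gap: "gap > 0"
    unfolding gap_def using mu_pos edge two_point_gap_pos assms(3) u_pos by simp
  obtain \<eta> N where \<eta>: "\<And>x. \<eta> x \<ge> 0" "\<And>x. N \<le> gdist adj v0 x \<Longrightarrow> \<eta> x = 0"
      "\<And>x. gdist adj v0 x \<le> max (gdist adj v0 x0) (gdist adj v0 y0) \<Longrightarrow> \<eta> x = 1"
      "max (gdist adj v0 x0) (gdist adj v0 y0) \<le> N"
      and energy: "m_energy adj mu v0 N m \<eta> \<le> gap / (edge_const m + 1)"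
    using volume_growth_imp_small_energy_cutoff[OF assms(3,5)] gap edge_const_nonneg[OF assms(3)]
    by (metis add_nonneg_pos divide_pos_pos zero_less_one)
  have "gap \<le> edge_const m * m_energy adj mu v0 N m \<eta>"
    unfolding gap_def using sol assms(3,4) \<eta> edge(1)
    by (intro superharmonic_edge_le_energy u_pos nontrivial_positive_solution_superharmonic)
      (auto simp: ball_edges_def)
  also have "\<dots> \<le> edge_const m * (gap / (edge_const m + 1))"
    using energy edge_const_nonneg[OF assms(3)] by (rule mult_left_mono)
  also have "\<dots> < gap" using gap edge_const_nonneg[OF assms(3)] by (simp add: field_simps)
  finally show False by simp
qed

end
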